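(* Let $H$ be a cancellative monoid and $r$ an ideal system on $H$ such that $(\mathcal I_r(H),\cdot_r)$ is unit-cancellative. Suppose there are a non-$r$-cancellation ideal $I\in\mathcal I_r(H)$, an atom $J_1$ of $\mathcal I_r(H)$, and an element $J_2\in\mathcal I_r(H)$ that is not an atom of $\mathcal I_r(H)$, such that $I\cdot_r J_1=I\cdot_r J_2$. Then $\mathcal I_r(H)$ is not a transfer Krull monoid.
   Context: Ideal system $r$ on a cancellative monoid $H$: a map $X\mapsto X_r$ on subsets of $H$ with $X\subseteq X_r$; $X\subseteq Y_r\Rightarrow X_r\subseteq Y_r$; $aH\subseteq\{a\}_r$; $aX_r=(aX)_r$. $\mathcal I_r(H)$ is the set of nonempty $r$-ideals ($I_r=I$) with $I\cdot_rJ=(IJ)_r$, a reduced semigroup with identity $H$. $I$ is an $r$-cancellation ideal if $I\cdot_rJ_1=I\cdot_rJ_2$ implies $J_1=J_2$. Monoids are commutative, unit-cancellative, with identity; an atom is a non-unit $u$ with $u=ab\Rightarrow a$ or $b$ a unit. A monoid homomorphism $\theta:H\to B$ is a transfer homomorphism if (T1) $B=\theta(H)B^\times$ and $\theta^{-1}(B^\times)=H^\times$, and (T2) whenever $\theta(u)=bc$ with $u\in H$, $b,c\in B$, there are $v,w\in H$ with $u=vw$, $\theta(v)\in bB^\times$, $\theta(w)\in cB^\times$. A Krull monoid is a cancellative monoid admitting a divisor homomorphism into a factorial monoid. A monoid is transfer Krull if it admits a transfer homomorphism to a Krull monoid. *)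

theory Defs
  imports "HOL-Algebra.Divisibility"
begin

definition cancellative_monoid :: "('a, 'm) monoid_scheme \<Rightarrow> bool" where
  "cancellative_monoid H \<longleftrightarrow> comm_monoid_cancel H"

definition unit_cancellative :: "('a, 'm) monoid_scheme \<Rightarrow> bool" where
  "unit_cancellative H \<longleftrightarrow>
     (\<forall>a\<in>carrier H. \<forall>b\<in>carrier H.
        (a = a \<otimes>\<^bsub>H\<^esub> b \<or> a = b \<otimes>\<^bsub>H\<^esub> a) \<longrightarrow> b \<in> Units H)"

definition atom :: "('a, 'm) monoid_scheme \<Rightarrow> 'a \<Rightarrow> bool" where
  "atom H u \<longleftrightarrow> u \<in> carrier H \<and> u \<notin> Units H \<and>
     (\<forall>a\<in>carrier H. \<forall>b\<in>carrier H. u = a \<otimes>\<^bsub>H\<^esub> b \<longrightarrow> a \<in> Units H \<or> b \<in> Units H)"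

definition set_mult :: "('a, 'm) monoid_scheme \<Rightarrow> 'a set \<Rightarrow> 'a set \<Rightarrow> 'a set" where
  "set_mult H X Y = {x \<otimes>\<^bsub>H\<^esub> y | x y. x \<in> X \<and> y \<in> Y}"

definition ideal_system :: "('a, 'm) monoid_scheme \<Rightarrow> ('a set \<Rightarrow> 'a set) \<Rightarrow> bool" where
  "ideal_system H r \<longleftrightarrow>
     (\<forall>X. X \<subseteq> carrier H \<longrightarrow> X \<subseteq> r X \<and> r X \<subseteq> carrier H) \<and>
     (\<forall>X Y. X \<subseteq> carrier H \<longrightarrow> Y \<subseteq> carrier H \<longrightarrow> X \<subseteq> r Y \<longrightarrow> r X \<subseteq> r Y) \<and>
     (\<forall>a\<in>carrier H. set_mult H {a} (carrier H) \<subseteq> r {a}) \<and>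
     (\<forall>a\<in>carrier H. \<forall>X. X \<subseteq> carrier H \<longrightarrow>
        set_mult H {a} (r X) = r (set_mult H {a} X))"

definition r_ideals :: "('a, 'm) monoid_scheme \<Rightarrow> ('a set \<Rightarrow> 'a set) \<Rightarrow> 'a set set" where
  "r_ideals H r = {I. I \<subseteq> carrier H \<and> I \<noteq> {} \<and> r I = I}"

definition r_ideal_monoid :: "('a, 'm) monoid_scheme \<Rightarrow> ('a set \<Rightarrow> 'a set) \<Rightarrow> 'a set monoid" where
  "r_ideal_monoid H r =
     \<lparr>carrier = r_ideals H r, mult = (\<lambda>I J. r (set_mult H I J)), one = carrier H\<rparr>"

definition r_cancellation_ideal :: "('a, 'm) monoid_scheme \<Rightarrow> ('a set \<Rightarrow> 'a set) \<Rightarrow> 'a set \<Rightarrow> bool" where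
  "r_cancellation_ideal H r I \<longleftrightarrow>
     (\<forall>J1\<in>r_ideals H r. \<forall>J2\<in>r_ideals H r.
        r (set_mult H I J1) = r (set_mult H I J2) \<longrightarrow> J1 = J2)"

definition monoid_homomorphism ::
  "('a, 'm) monoid_scheme \<Rightarrow> ('b, 'n) monoid_scheme \<Rightarrow> ('a \<Rightarrow> 'b) \<Rightarrow> bool" where
  "monoid_homomorphism H B \<theta> \<longleftrightarrow>
     (\<forall>x\<in>carrier H. \<theta> x \<in> carrier B) \<and> \<theta> \<one>\<^bsub>H\<^esub> = \<one>\<^bsub>B\<^esub> \<and>
     (\<forall>x\<in>carrier H. \<forall>y\<in>carrier H. \<theta> (x \<otimes>\<^bsub>H\<^esub> y) = \<theta> x \<otimes>\<^bsub>B\<^esub> \<theta> y)"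

definition transfer_hom ::
  "('a, 'm) monoid_scheme \<Rightarrow> ('b, 'n) monoid_scheme \<Rightarrow> ('a \<Rightarrow> 'b) \<Rightarrow> bool" where
  "transfer_hom H B \<theta> \<longleftrightarrow>
     monoid_homomorphism H B \<theta> \<and>
     (\<forall>b\<in>carrier B. \<exists>u\<in>carrier H. \<exists>e\<in>Units B. b = \<theta> u \<otimes>\<^bsub>B\<^esub> e) \<and>
     {u \<in> carrier H. \<theta> u \<in> Units B} = Units H \<and>
     (\<forall>u\<in>carrier H. \<forall>b\<in>carrier B. \<forall>c\<in>carrier B. \<theta> u = b \<otimes>\<^bsub>B\<^esub> c \<longrightarrow>
        (\<exists>v\<in>carrier H. \<exists>w\<in>carrier H. u = v \<otimes>\<^bsub>H\<^esub> w \<and>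
           (\<exists>e\<in>Units B. \<theta> v = b \<otimes>\<^bsub>B\<^esub> e) \<and> (\<exists>e\<in>Units B. \<theta> w = c \<otimes>\<^bsub>B\<^esub> e)))"

definition divisor_hom ::
  "('a, 'm) monoid_scheme \<Rightarrow> ('b, 'n) monoid_scheme \<Rightarrow> ('a \<Rightarrow> 'b) \<Rightarrow> bool" where
  "divisor_hom H F \<phi> \<longleftrightarrow>
     monoid_homomorphism H F \<phi> \<and>
     (\<forall>a\<in>carrier H. \<forall>b\<in>carrier H. \<phi> a divides\<^bsub>F\<^esub> \<phi> b \<longrightarrow> a divides\<^bsub>H\<^esub> b)"

(* Krull monoid: cancellative monoid with a divisor homomorphism into a factorial monoid.
   The factorial monoid lives in a type 'c, given explicitly by TYPE('c). *)
definition krull_monoid :: "'c itself \<Rightarrow> ('b, 'n) monoid_scheme \<Rightarrow> bool" where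
  "krull_monoid (_ :: 'c itself) B \<longleftrightarrow> cancellative_monoid B \<and>
     (\<exists>(F :: 'c monoid) \<phi>. factorial_monoid F \<and> divisor_hom B F \<phi>)"

(* transfer Krull, with the Krull monoid in type 'b and its factorial monoid in type 'c *)
definition transfer_krull :: "'b itself \<Rightarrow> 'c itself \<Rightarrow> ('a, 'm) monoid_scheme \<Rightarrow> bool" where
  "transfer_krull (_ :: 'b itself) (tc :: 'c itself) H \<longleftrightarrow>
     (\<exists>(B :: 'b monoid) \<theta>. krull_monoid tc B \<and> transfer_hom H B \<theta>)"

end

theory Submission
  imports Defs
begin

text \<open>A transfer homomorphism \<open>\<theta>\<close> into a Krull monoid \<open>B\<close> both preserves and reflects
  atoms. Applying \<open>\<theta>\<close> to \<open>I \<cdot>\<^sub>r J\<^sub>1 = I \<cdot>\<^sub>r J\<^sub>2\<close> and cancelling \<open>\<theta> I\<close> in the cancellative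
  monoid \<open>B\<close> gives \<open>\<theta> J\<^sub>1 = \<theta> J\<^sub>2\<close>, so the atom \<open>J\<^sub>1\<close> and the non-atom \<open>J\<^sub>2\<close> would have the
  same image.\<close>

lemma transfer_hom_Units_iff:
  assumes "transfer_hom H B \<theta>" and "x \<in> carrier H"
  shows "\<theta> x \<in> Units B \<longleftrightarrow> x \<in> Units H"
  using assms unfolding transfer_hom_def by blast

lemma transfer_hom_preserves_atom:
  assumes "comm_monoid B" and tr: "transfer_hom H B \<theta>" and u: "atom H u"
  shows "atom B (\<theta> u)"
proof -
  interpret B: comm_monoid B by fact
  have u_carrier: "u \<in> carrier H" and u_nonunit: "u \<notin> Units H"
    and u_irred: "\<And>v w. v \<in> carrier H \<Longrightarrow> w \<in> carrier H \<Longrightarrow> u = v \<otimes>\<^bsub>H\<^esub> w \<Longrightarrow>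
                   v \<in> Units H \<or> w \<in> Units H"
    using u unfolding atom_def by blast+
  have "\<theta> u \<in> carrier B"
    using tr u_carrier unfolding transfer_hom_def monoid_homomorphism_def by blast
  moreover have "\<theta> u \<notin> Units B"
    using transfer_hom_Units_iff[OF tr u_carrier] u_nonunit by blast
  moreover have "b \<in> Units B \<or> c \<in> Units B"
    if b: "b \<in> carrier B" and c: "c \<in> carrier B" and bc: "\<theta> u = b \<otimes>\<^bsub>B\<^esub> c" for b c
  proof -
    obtain v w e e' where vw: "v \<in> carrier H" "w \<in> carrier H" "u = v \<otimes>\<^bsub>H\<^esub> w"
      and e: "e \<in> Units B" "\<theta> v = b \<otimes>\<^bsub>B\<^esub> e"
      and e': "e' \<in> Units B" "\<theta> w = c \<otimes>\<^bsub>B\<^esub> e'"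
      using tr u_carrier b c bc unfolding transfer_hom_def by meson
    from u_irred[OF vw] show ?thesis
      using transfer_hom_Units_iff[OF tr] vw e e' b c B.unit_factor B.Units_closed by metis
  qed
  ultimately show ?thesis
    unfolding atom_def by blast
qed

lemma transfer_hom_reflects_atom:
  assumes tr: "transfer_hom H B \<theta>" and u: "u \<in> carrier H" and image_atom: "atom B (\<theta> u)"
  shows "atom H u"
proof (rule ccontr)
  assume "\<not> atom H u"
  moreover have "u \<notin> Units H"
    using image_atom transfer_hom_Units_iff[OF tr u] unfolding atom_def by blast
  ultimately obtain a b where ab: "a \<in> carrier H" "b \<in> carrier H" "u = a \<otimes>\<^bsub>H\<^esub> b"
    "a \<notin> Units H" "b \<notin> Units H"
    using u unfolding atom_def by blast
  have "monoid_homomorphism H B \<theta>"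
    using tr unfolding transfer_hom_def by blast
  then have "\<theta> u = \<theta> a \<otimes>\<^bsub>B\<^esub> \<theta> b" and "\<theta> a \<in> carrier B" and "\<theta> b \<in> carrier B"
    using ab unfolding monoid_homomorphism_def by simp_all
  moreover have "\<theta> a \<notin> Units B" and "\<theta> b \<notin> Units B"
    using transfer_hom_Units_iff[OF tr] ab by simp_all
  ultimately show False
    using image_atom unfolding atom_def by blast
qed

lemma transfer_hom_atom_iff:
  assumes "comm_monoid B" and "transfer_hom H B \<theta>" and "u \<in> carrier H"
  shows "atom B (\<theta> u) \<longleftrightarrow> atom H u"
  using assms transfer_hom_preserves_atom transfer_hom_reflects_atom by metis

lemma transfer_hom_cancel:
  assumes "comm_monoid_cancel B" and tr: "transfer_hom H B \<theta>"
    and "x \<in> carrier H" "y \<in> carrier H" "z \<in> carrier H"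
    and "x \<otimes>\<^bsub>H\<^esub> y = x \<otimes>\<^bsub>H\<^esub> z"
  shows "\<theta> y = \<theta> z"
proof -
  interpret B: comm_monoid_cancel B by fact
  have hom: "monoid_homomorphism H B \<theta>"
    using tr unfolding transfer_hom_def by blast
  then have "\<theta> x \<otimes>\<^bsub>B\<^esub> \<theta> y = \<theta> x \<otimes>\<^bsub>B\<^esub> \<theta> z"
    using assms unfolding monoid_homomorphism_def by metis
  then show ?thesis
    using hom assms B.l_cancel unfolding monoid_homomorphism_def by blast
qed

theorem lemma4p8:
  fixes H :: "'a monoid" and r :: "'a set \<Rightarrow> 'a set"
    and I J1 J2 :: "'a set"
  assumes "cancellative_monoid H"
    and "ideal_system H r"
    and "unit_cancellative (r_ideal_monoid H r)"
    and "I \<in> r_ideals H r" and "\<not> r_cancellation_ideal H r I"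
    and "atom (r_ideal_monoid H r) J1"
    and "J2 \<in> r_ideals H r" and "\<not> atom (r_ideal_monoid H r) J2"
    and "r (set_mult H I J1) = r (set_mult H I J2)"
  shows "\<not> transfer_krull TYPE('b) TYPE('c) (r_ideal_monoid H r)"
proof
  let ?M = "r_ideal_monoid H r"
  assume "transfer_krull TYPE('b) TYPE('c) ?M"
  then obtain B :: "'b monoid" and \<theta> where "krull_monoid TYPE('c) B" and tr: "transfer_hom ?M B \<theta>"
    unfolding transfer_krull_def by blast
  then have B: "comm_monoid_cancel B"
    unfolding krull_monoid_def cancellative_monoid_def by blast
  have carriers: "I \<in> carrier ?M" "J1 \<in> carrier ?M" "J2 \<in> carrier ?M"
    using assms(4,6,7) unfolding atom_def by (simp_all add: r_ideal_monoid_def)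
  have "I \<otimes>\<^bsub>?M\<^esub> J1 = I \<otimes>\<^bsub>?M\<^esub> J2"
    using assms(9) by (simp add: r_ideal_monoid_def)
  then have "\<theta> J1 = \<theta> J2"
    using transfer_hom_cancel[OF B tr] carriers by blast
  moreover have "comm_monoid B"
    using B by (simp add: comm_monoid_cancel_def)
  ultimately show False
    using transfer_hom_atom_iff[OF _ tr] carriers assms(6,8) by metis
qed

end
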